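(* Let $q$ be a positive integer and let $G=(V,E)$ be an undirected graph with $4q$ vertices. Then $G$ has a two-factor $E'$ all of whose cycle lengths are multiples of four if and only if $(G,\alpha)$ admits a $q$-biased $(2,2)$-dissolution, where $\alpha(v)=1$ for all $v\in V$.
   Context: A two-factor of $G=(V,E)$ is an edge subset $E'\subseteq E$ such that every vertex has degree exactly two in $(V,E')$, so $(V,E')$ is a disjoint union of cycles. For $V'\subseteq V(G)$ let $Z(V',G):=\{(x,y)\mid x\in V',\ y\in V(G)\setminus V',\ \{x,y\}\in E(G)\}$. For positive integers $s,\Delta_s$, an $(s,\Delta_s)$-dissolution for $G$ is a pair $(D,z)$ with $D\subset V(G)$ and $z\colon Z(D,G)\to\{0,\dots,s\}$ such that (a) each $v'\in D$ satisfies $\sum_{(v',v)\in Z(D,G)} z(v',v)=s$, and (b) each $v\in V(G)\setminus D$ satisfies $\sum_{(v',v)\in Z(D,G)} z(v',v)=\Delta_s$. Given $\alpha\colon V(G)\to\{0,\dots,s\}$ and an integer $r_\alpha$, a tuple $(D,z,z_\alpha,R_\alpha)$ is an $r_\alpha$-biased $(s,\Delta_s)$-dissolution for $(G,\alpha)$ if $(D,z)$ is an $(s,\Delta_s)$-dissolution, $z_\alpha\colon Z(D,G)\to\{0,\dots,s\}$, $R_\alpha\subseteq V(G)\setminus D$ with $|R_\alpha|=r_\alpha$, and (c) $z_\alpha(v',v)\le z(v',v)$ for all $(v',v)\in Z(D,G)$; (d) each $v'\in D$ satisfies $\sum_{(v',v)\in Z(D,G)} z_\alpha(v',v)=\alpha(v')$;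 (e) each $v\in R_\alpha$ satisfies $\alpha(v)+\sum_{(v',v)\in Z(D,G)} z_\alpha(v',v)>(s+\Delta_s)/2$. *)

theory Defs
  imports Main Complex_Main
begin

definition ugraph :: "'a set \<Rightarrow> 'a set set \<Rightarrow> bool" where
  "ugraph V E \<longleftrightarrow> finite V \<and> (\<forall>e\<in>E. e \<subseteq> V \<and> card e = 2)"

definition degree :: "'a set set \<Rightarrow> 'a \<Rightarrow> nat" where
  "degree E' v = card {e \<in> E'. v \<in> e}"

definition two_factor :: "'a set \<Rightarrow> 'a set set \<Rightarrow> 'a set set \<Rightarrow> bool" where
  "two_factor V E E' \<longleftrightarrow> E' \<subseteq> E \<and> (\<forall>v\<in>V. degree E' v = 2)"

text \<open>Connected component of v in (V,E'); for a two-factor these are exactly the cycles.\<close>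
definition component :: "'a set set \<Rightarrow> 'a \<Rightarrow> 'a set" where
  "component E' v = {u. (\<lambda>x y. {x, y} \<in> E')\<^sup>*\<^sup>* v u}"

definition cycle_lengths_mult4 :: "'a set \<Rightarrow> 'a set set \<Rightarrow> bool" where
  "cycle_lengths_mult4 V E' \<longleftrightarrow> (\<forall>v\<in>V. 4 dvd card (component E' v))"

definition Zset :: "'a set \<Rightarrow> 'a set \<Rightarrow> 'a set set \<Rightarrow> ('a \<times> 'a) set" where
  "Zset D V E = {(x, y). x \<in> D \<and> y \<in> V - D \<and> {x, y} \<in> E}"

definition dissolution ::
  "'a set \<Rightarrow> 'a set set \<Rightarrow> nat \<Rightarrow> nat \<Rightarrow> 'a set \<Rightarrow> ('a \<times> 'a \<Rightarrow> nat) \<Rightarrow> bool" where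
  "dissolution V E s \<Delta> D z \<longleftrightarrow>
     D \<subset> V \<and>
     (\<forall>p\<in>Zset D V E. z p \<le> s) \<and>
     (\<forall>v'\<in>D. (\<Sum>v\<in>{v. (v', v) \<in> Zset D V E}. z (v', v)) = s) \<and>
     (\<forall>v\<in>V - D. (\<Sum>v'\<in>{v'. (v', v) \<in> Zset D V E}. z (v', v)) = \<Delta>)"

definition biased_dissolution ::
  "'a set \<Rightarrow> 'a set set \<Rightarrow> nat \<Rightarrow> nat \<Rightarrow> ('a \<Rightarrow> nat) \<Rightarrow> nat \<Rightarrow>
   'a set \<Rightarrow> ('a \<times> 'a \<Rightarrow> nat) \<Rightarrow> ('a \<times> 'a \<Rightarrow> nat) \<Rightarrow> 'a set \<Rightarrow> bool" where
  "biased_dissolution V E s \<Delta> \<alpha> r D z z\<alpha> R \<longleftrightarrow>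
     dissolution V E s \<Delta> D z \<and>
     (\<forall>p\<in>Zset D V E. z\<alpha> p \<le> s) \<and>
     R \<subseteq> V - D \<and> card R = r \<and>
     (\<forall>p\<in>Zset D V E. z\<alpha> p \<le> z p) \<and>
     (\<forall>v'\<in>D. (\<Sum>v\<in>{v. (v', v) \<in> Zset D V E}. z\<alpha> (v', v)) = \<alpha> v') \<and>
     (\<forall>v\<in>R. real (\<alpha> v + (\<Sum>v'\<in>{v'. (v', v) \<in> Zset D V E}. z\<alpha> (v', v)))
               > (real s + real \<Delta>) / 2)"

end

theory Submission
  imports Defs
begin

text \<open>
  Walking around a cycle of length divisible by 4 and numbering its vertices mod 4 gives a
  labelling in which the two neighbours of each vertex carry the labels one above and one below.
  Put the even-labelled vertices into D and the vertices labelled 1 into R, give every edge of the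
  two-factor weight 1 in z, and those ending in R weight 1 in z\<alpha>: every vertex of D has exactly
  one neighbour labelled 1.

  Conversely, double counting the weights across the cut gives \<open>card D = 2 * q\<close>, so the
  q vertices of R, each needing bias at least 2, use up the whole bias budget: they receive
  exactly 2 and all other vertices outside D receive 0. Hence no cut edge has weight 2, the
  edges of weight 1 form a two-factor, and double counting inside a cycle C yields
  \<open>card C = card (C \<inter> D) + card (C - D) = 4 * card (C \<inter> R)\<close>.
\<close>

lemma sum_if_const_eq_card:
  "finite S \<Longrightarrow> (\<Sum>x\<in>S. if P x then c else 0) = (c::nat) * card {x\<in>S. P x}"
  by (simp add: sum.inter_filter[symmetric] mult.commute)

lemma sum_le_one_eq_card:
  fixes f :: "'a \<Rightarrow> nat"
  assumes "finite S" and "\<And>x. x \<in> S \<Longrightarrow> f x \<le> 1"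
  shows "sum f S = card {x\<in>S. f x = 1}"
proof -
  have "sum f S = (\<Sum>x\<in>S. if f x = 1 then 1 else 0)"
    using assms(2) by (intro sum.cong) (auto simp: le_Suc_eq)
  then show ?thesis
    using sum_if_const_eq_card[OF assms(1)] by simp
qed

lemma sum_eq_bound_on_subset:
  fixes f :: "'a \<Rightarrow> nat"
  assumes "finite A" and "R \<subseteq> A" and "\<And>y. y \<in> R \<Longrightarrow> c \<le> f y"
    and "sum f A \<le> c * card R" and "y \<in> A"
  shows "f y = (if y \<in> R then c else 0)"
proof -
  have fin_R: "finite R"
    using assms(1,2) by (rule rev_finite_subset)
  have "c * card R \<le> sum f R"
    using sum_mono[of R "\<lambda>_. c" f] assms(3) by (simp add: mult.commute)
  moreover have "sum f A = sum f (A - R) + sum f R"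
    using sum.subset_diff[OF assms(2,1)] .
  ultimately have "sum f (A - R) = 0" and sum_R: "sum f R = sum (\<lambda>_. c) R"
    using assms(4) by (auto simp: mult.commute)
  show ?thesis
  proof (cases "y \<in> R")
    case True
    then show ?thesis
      using sum_mono_inv[OF sum_R[symmetric] _ True fin_R] assms(3) by simp
  next
    case False
    then show ?thesis
      using \<open>sum f (A - R) = 0\<close> assms(1,5) by simp
  qed
qed

lemma sum_eq_single_if_dominated:
  fixes f g :: "'a \<Rightarrow> nat"
  assumes "finite A" and "a \<in> A" and "\<And>x. x \<in> A \<Longrightarrow> g x \<le> f x" and "sum f A = f a"
  shows "sum g A = g a"
proof -
  have "sum f (A - {a}) = 0"
    using sum.remove[OF assms(1,2), of f] assms(4) by simp
  then have "\<forall>x\<in>A - {a}. g x = 0"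
    using assms(1,3) by (metis DiffD1 finite_Diff le_zero_eq sum_eq_0_iff)
  then show ?thesis
    using sum.remove[OF assms(1,2), of g] by simp
qed

section \<open>Weights on the cut between D and V - D\<close>

definition out_weight :: "'a set \<Rightarrow> 'a set set \<Rightarrow> 'a set \<Rightarrow> ('a \<times> 'a \<Rightarrow> nat) \<Rightarrow> 'a \<Rightarrow> nat" where
  "out_weight V E D g x = (\<Sum>y\<in>{y. (x, y) \<in> Zset D V E}. g (x, y))"

definition in_weight :: "'a set \<Rightarrow> 'a set set \<Rightarrow> 'a set \<Rightarrow> ('a \<times> 'a \<Rightarrow> nat) \<Rightarrow> 'a \<Rightarrow> nat" where
  "in_weight V E D g y = (\<Sum>x\<in>{x. (x, y) \<in> Zset D V E}. g (x, y))"

lemma biased_dissolution_22_iff: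
  "biased_dissolution V E 2 2 (\<lambda>_. 1) q D z z\<alpha> R \<longleftrightarrow>
     D \<subset> V \<and> (\<forall>p\<in>Zset D V E. z p \<le> 2 \<and> z\<alpha> p \<le> z p) \<and>
     (\<forall>x\<in>D. out_weight V E D z x = 2 \<and> out_weight V E D z\<alpha> x = 1) \<and>
     (\<forall>y\<in>V - D. in_weight V E D z y = 2) \<and>
     R \<subseteq> V - D \<and> card R = q \<and> (\<forall>y\<in>R. 2 \<le> in_weight V E D z\<alpha> y)"
  unfolding biased_dissolution_def dissolution_def out_weight_def[symmetric] in_weight_def[symmetric]
  by auto

lemma finite_Zset_out: "finite V \<Longrightarrow> finite {y. (x, y) \<in> Zset D V E}"
  by (rule rev_finite_subset) (auto simp: Zset_def)

lemma finite_Zset_in: "finite V \<Longrightarrow> D \<subseteq> V \<Longrightarrow> finite {x. (x, y) \<in> Zset D V E}"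
  by (rule rev_finite_subset) (auto simp: Zset_def)

lemma sum_out_weight_eq_sum_in_weight:
  assumes fin: "finite V" and "D \<subseteq> V"
    and closed: "\<And>x y. (x, y) \<in> Zset D V E \<Longrightarrow> g (x, y) \<noteq> 0 \<Longrightarrow> x \<in> S \<longleftrightarrow> y \<in> S"
  shows "(\<Sum>x\<in>D \<inter> S. out_weight V E D g x) = (\<Sum>y\<in>(V - D) \<inter> S. in_weight V E D g y)"
proof -
  let ?Z = "Zset D V E"
  have out: "out_weight V E D g x = (\<Sum>y\<in>{y \<in> (V - D) \<inter> S. (x, y) \<in> ?Z}. g (x, y))"
    if "x \<in> D \<inter> S" for x
    unfolding out_weight_def
    using that closed by (intro sum.mono_neutral_right finite_Zset_out[OF fin]) (auto simp: Zset_def)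
  have inw: "in_weight V E D g y = (\<Sum>x\<in>{x \<in> D \<inter> S. (x, y) \<in> ?Z}. g (x, y))"
    if "y \<in> (V - D) \<inter> S" for y
    unfolding in_weight_def
    using that closed \<open>D \<subseteq> V\<close>
    by (intro sum.mono_neutral_right finite_Zset_in[OF fin]) (auto simp: Zset_def)
  have "(\<Sum>x\<in>D \<inter> S. out_weight V E D g x)
      = (\<Sum>x\<in>D \<inter> S. \<Sum>y\<in>{y \<in> (V - D) \<inter> S. (x, y) \<in> ?Z}. g (x, y))"
    using out by (rule sum.cong[OF refl])
  also have "\<dots> = (\<Sum>y\<in>(V - D) \<inter> S. \<Sum>x\<in>{x \<in> D \<inter> S. (x, y) \<in> ?Z}. g (x, y))"
    using fin \<open>D \<subseteq> V\<close> by (intro sum.swap_restrict) (auto intro: rev_finite_subset)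
  also have "\<dots> = (\<Sum>y\<in>(V - D) \<inter> S. in_weight V E D g y)"
    using inw by simp
  finally show ?thesis .
qed

lemma cut_weight_balance:
  assumes "finite V" and "D \<subseteq> V"
  shows "(\<Sum>x\<in>D. out_weight V E D g x) = (\<Sum>y\<in>V - D. in_weight V E D g y)"
proof -
  have "(\<Sum>x\<in>D \<inter> V. out_weight V E D g x) = (\<Sum>y\<in>(V - D) \<inter> V. in_weight V E D g y)"
    using assms by (rule sum_out_weight_eq_sum_in_weight) (use assms(2) in \<open>auto simp: Zset_def\<close>)
  then show ?thesis
    using assms(2) by (simp add: Int_absorb2 Int_absorb1)
qed

lemma card_eq_half_if_cut_regular:
  assumes "finite V" and "D \<subseteq> V"
    and "\<And>x. x \<in> D \<Longrightarrow> out_weight V E D g x = 2" and "\<And>y. y \<in> V - D \<Longrightarrow> in_weight V E D g y = 2"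
  shows "2 * card D = card V"
proof -
  have "card D = card (V - D)"
    using cut_weight_balance[OF assms(1,2), of E g] assms(3,4) by simp
  then show ?thesis
    using card_Diff_subset[OF finite_subset[OF assms(2,1)] assms(2)] card_mono[OF assms(1,2)] by simp
qed

definition nbr :: "'a set set \<Rightarrow> 'a \<Rightarrow> 'a set" where
  "nbr E v = {u. {v, u} \<in> E}"

lemma nbr_sym: "u \<in> nbr E v \<longleftrightarrow> v \<in> nbr E u"
  by (simp add: nbr_def insert_commute)

lemma degree_eq_card_nbr:
  assumes "\<And>e. e \<in> E \<Longrightarrow> card e = 2"
  shows "degree E v = card (nbr E v)"
proof -
  have "{e \<in> E. v \<in> e} = (\<lambda>u. {v, u}) ` nbr E v"
  proof (intro equalityI subsetI)
    fix e assume e: "e \<in> {e \<in> E. v \<in> e}"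
    then obtain x y where "e = {x, y}"
      using assms[of e] by (auto simp: card_2_iff)
    with e have "e = {v, if x = v then y else x}" and "(if x = v then y else x) \<in> nbr E v"
      by (auto simp: nbr_def insert_commute)
    then show "e \<in> (\<lambda>u. {v, u}) ` nbr E v"
      by blast
  qed (auto simp: nbr_def)
  moreover have "inj_on (\<lambda>u. {v, u}) (nbr E v)"
    by (auto simp: inj_on_def doubleton_eq_iff)
  ultimately show ?thesis
    by (simp add: degree_def card_image)
qed

lemma component_iff_rtranclp_nbr: "u \<in> component E v \<longleftrightarrow> (\<lambda>x y. y \<in> nbr E x)\<^sup>*\<^sup>* v u"
  by (simp add: component_def nbr_def)

lemma self_in_component: "v \<in> component E v"
  by (simp add: component_def)

lemma component_closed: "u \<in> component E v \<Longrightarrow> w \<in> nbr E u \<Longrightarrow> w \<in> component E v"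
  by (auto simp: component_iff_rtranclp_nbr intro: rtranclp.rtrancl_into_rtrancl)

lemma component_eq:
  assumes "u \<in> component E v"
  shows "component E u = component E v"
proof -
  have "symp (\<lambda>x y. y \<in> nbr E x)"
    by (auto simp: symp_def nbr_sym)
  then have "(\<lambda>x y. y \<in> nbr E x)\<^sup>*\<^sup>* u v"
    using assms by (auto simp: component_iff_rtranclp_nbr dest: sympD[OF symp_rtranclp])
  with assms show ?thesis
    unfolding component_iff_rtranclp_nbr set_eq_iff by (meson rtranclp_trans)
qed

lemma component_subset:
  assumes "v \<in> V" and "\<And>u. nbr E u \<subseteq> V"
  shows "component E v \<subseteq> V"
proof
  fix u assume "u \<in> component E v"
  then have "(\<lambda>x y. y \<in> nbr E x)\<^sup>*\<^sup>* v u"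
    by (simp add: component_iff_rtranclp_nbr)
  then show "u \<in> V"
    by (induction rule: rtranclp_induct) (use assms in auto)
qed

section \<open>Labelling the cycles of a two-regular graph mod 4\<close>

definition mod4_labelling :: "'a set set \<Rightarrow> 'a set \<Rightarrow> ('a \<Rightarrow> nat) \<Rightarrow> bool" where
  "mod4_labelling E C f \<longleftrightarrow>
     (\<forall>v\<in>C. f v < 4 \<and>
        (\<exists>u1 u2. nbr E v = {u1, u2} \<and> f u1 = (f v + 1) mod 4 \<and> f u2 = (f v + 3) mod 4))"

locale two_regular =
  fixes V :: "'a set" and E :: "'a set set"
  assumes finite_V: "finite V"
    and edge_subset: "\<And>e. e \<in> E \<Longrightarrow> e \<subseteq> V"
    and card_edge: "\<And>e. e \<in> E \<Longrightarrow> card e = 2"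
    and degree_two: "\<And>v. v \<in> V \<Longrightarrow> degree E v = 2"
begin

lemma card_nbr: "v \<in> V \<Longrightarrow> card (nbr E v) = 2"
  using degree_two degree_eq_card_nbr card_edge by metis

lemma nbr_in_V: "u \<in> nbr E v \<Longrightarrow> u \<in> V"
  using edge_subset by (auto simp: nbr_def)

lemma not_in_nbr: "v \<notin> nbr E v"
  using card_edge by (fastforce simp: nbr_def)

fun walk :: "'a \<Rightarrow> 'a \<Rightarrow> nat \<Rightarrow> 'a" where
  "walk a b 0 = a"
| "walk a b (Suc 0) = b"
| "walk a b (Suc (Suc n)) = (SOME u. u \<in> nbr E (walk a b (Suc n)) \<and> u \<noteq> walk a b n)"

declare walk.simps(3)[simp del]

lemma walk_period:
  assumes "walk a b p = a" and "walk a b (Suc p) = b"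
  shows "walk a b n = walk a b (n mod p)"
proof -
  have shift: "walk a b (n + p) = walk a b n \<and> walk a b (Suc n + p) = walk a b (Suc n)" for n
  proof (induction n)
    case (Suc n)
    then show ?case
      by (simp add: walk.simps(3))
  qed (use assms in simp)
  have "walk a b (n + k * p) = walk a b n" for n k
  proof (induction k)
    case (Suc k)
    have "n + Suc k * p = (n + k * p) + p"
      by simp
    then show ?case
      using shift[of "n + k * p"] Suc by (simp only:)
  qed simp
  from this[of "n mod p" "n div p"] show ?thesis
    by simp
qed

lemma walk_Suc_Suc:
  assumes "walk a b (Suc n) \<in> V"
  shows "walk a b (Suc (Suc n)) \<in> nbr E (walk a b (Suc n)) \<and> walk a b (Suc (Suc n)) \<noteq> walk a b n"
proof -
  obtain x y where "nbr E (walk a b (Suc n)) = {x, y}" "x \<noteq> y"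
    using card_nbr[OF assms] by (meson card_2_iff)
  then have "\<exists>u. u \<in> nbr E (walk a b (Suc n)) \<and> u \<noteq> walk a b n"
    by blast
  from someI_ex[OF this] show ?thesis
    by (simp add: walk.simps(3))
qed

context
  fixes a b
  assumes a_in_V: "a \<in> V" and b_nbr: "b \<in> nbr E a"
begin

lemma walk_in_V_and_Suc_nbr: "walk a b n \<in> V \<and> walk a b (Suc n) \<in> nbr E (walk a b n)"
proof (induction n)
  case 0
  then show ?case
    using a_in_V b_nbr by simp
next
  case (Suc n)
  then have "walk a b (Suc n) \<in> V"
    using nbr_in_V by blast
  then show ?case
    using walk_Suc_Suc by blast
qed

lemma walk_in_V: "walk a b n \<in> V"
  using walk_in_V_and_Suc_nbr by blast

lemma walk_Suc_in_nbr: "walk a b (Suc n) \<in> nbr E (walk a b n)"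
  using walk_in_V_and_Suc_nbr by blast

lemma walk_Suc_neq: "walk a b (Suc n) \<noteq> walk a b n"
  using walk_Suc_in_nbr not_in_nbr by metis

lemma walk_no_backtrack: "walk a b (Suc (Suc n)) \<noteq> walk a b n"
  using walk_Suc_Suc walk_in_V by blast

lemma nbr_walk_Suc: "nbr E (walk a b (Suc n)) = {walk a b n, walk a b (Suc (Suc n))}"
proof -
  have "walk a b n \<in> nbr E (walk a b (Suc n))"
    using walk_Suc_in_nbr nbr_sym by metis
  then show ?thesis
    using walk_Suc_in_nbr[of "Suc n"] walk_no_backtrack[of n] card_nbr[OF walk_in_V, of "Suc n"]
    by (auto simp: card_2_iff)
qed

lemma walk_not_inj: "\<not> inj_on (walk a b) {..card V}"
proof
  assume "inj_on (walk a b) {..card V}"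
  then have "card {..card V} \<le> card V"
    using card_inj_on_le finite_V walk_in_V by blast
  then show False
    by simp
qed

text \<open>The first vertex the walk revisits is its start: revisiting an inner vertex would give
  that vertex three distinct neighbours.\<close>
lemma first_repeat_is_start:
  assumes inj: "inj_on (walk a b) {..<p}" and repeat: "walk a b p \<in> walk a b ` {..<p}"
  shows "walk a b p = a"
proof -
  obtain m where m: "m < p" "walk a b p = walk a b m"
    using repeat by auto
  then obtain p' where p': "p = Suc p'"
    using not0_implies_Suc by force
  have "m = 0"
  proof (rule ccontr)
    assume "m \<noteq> 0"
    then obtain m' where m': "m = Suc m'"
      using not0_implies_Suc by blast
    have "walk a b p' \<in> nbr E (walk a b m)"
      using walk_Suc_in_nbr[of p'] nbr_sym m(2) p' by metis
    then have "walk a b p' \<in> {walk a b m', walk a b (Suc m)}"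
      using nbr_walk_Suc m' by simp
    moreover have "walk a b p' \<noteq> walk a b m'"
      using inj m m' p' by (auto dest: inj_onD)
    moreover have "walk a b p' \<noteq> walk a b (Suc m)"
    proof
      assume eq: "walk a b p' = walk a b (Suc m)"
      show False
      proof (cases "Suc m = p")
        case True
        then show False
          using eq m(2) walk_Suc_neq[of p'] p' by simp
      next
        case False
        then have "p' = Suc m"
          using inj eq m(1) p' by (auto dest: inj_onD)
        then show False
          using m(2) p' walk_no_backtrack[of m] by simp
      qed
    qed
    ultimately show False
      by blast
  qed
  then show ?thesis
    using m by simp
qed

lemma walk_returns:
  obtains p where "3 \<le> p" "walk a b p = a" "walk a b (Suc p) = b" "inj_on (walk a b) {..<p}"
proof -
  let ?repeat = "\<lambda>j. walk a b j \<in> walk a b ` {..<j}"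
  obtain i j where "i \<noteq> j" "walk a b i = walk a b j"
    using walk_not_inj by (auto simp: inj_on_def)
  then have "\<exists>j. ?repeat j"
    by (metis imageI lessThan_iff nat_neq_iff)
  define p where "p = (LEAST j. ?repeat j)"
  have repeat: "?repeat p"
    unfolding p_def using \<open>\<exists>j. ?repeat j\<close> by (rule LeastI_ex)
  have inj: "inj_on (walk a b) {..<p}"
  proof (rule inj_onI, rule ccontr)
    fix i j assume "i \<in> {..<p}" "j \<in> {..<p}" "walk a b i = walk a b j" "i \<noteq> j"
    then have "?repeat (max i j)" "max i j < p"
      by (auto simp: max_def image_iff intro: bexI[of _ i] bexI[of _ j])
    then show False
      unfolding p_def using not_less_Least by blast
  qed
  have start: "walk a b p = a"
    using first_repeat_is_start[OF inj repeat] .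
  have "p \<noteq> 0" "p \<noteq> 1" "p \<noteq> 2"
    using repeat walk_Suc_neq[of 0] walk_no_backtrack[of 0] start by (auto simp: numeral_2_eq_2)
  then have "3 \<le> p"
    by linarith
  then obtain p' where p': "p = Suc p'"
    using not0_implies_Suc by force
  have "b \<in> {walk a b p', walk a b (Suc p)}"
    using nbr_walk_Suc[of p'] b_nbr start p' by simp
  moreover have "b \<noteq> walk a b p'"
    using inj_onD[OF inj, of 1 p'] \<open>3 \<le> p\<close> p' by auto
  ultimately show ?thesis
    using that \<open>3 \<le> p\<close> start inj by auto
qed

lemma component_eq_walk_image:
  assumes "0 < p" and "walk a b p = a" and "walk a b (Suc p) = b"
  shows "component E a = walk a b ` {..<p}"
proof (intro equalityI subsetI)
  fix u assume "u \<in> component E a"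
  then have "(\<lambda>x y. y \<in> nbr E x)\<^sup>*\<^sup>* a u"
    by (simp add: component_iff_rtranclp_nbr)
  then have "u \<in> range (walk a b)"
  proof (induction rule: rtranclp_induct)
    case base
    then show ?case
      by (metis rangeI walk.simps(1))
  next
    case (step y w)
    then obtain n where "y = walk a b n"
      by auto
    then have "y = walk a b (Suc (n + p - 1))"
      using walk_period[OF assms(2,3), of n] walk_period[OF assms(2,3), of "n + p"] assms(1) by simp
    then show ?case
      using step nbr_walk_Suc by auto
  qed
  then obtain n where "u = walk a b n"
    by blast
  then show "u \<in> walk a b ` {..<p}"
    using walk_period[OF assms(2,3), of n] assms(1) by auto
next
  have "walk a b n \<in> component E a" for n
    by (induction n) (auto simp: self_in_component intro: component_closed walk_Suc_in_nbr)
  then show "u \<in> walk a b ` {..<p} \<Longrightarrow> u \<in> component E a" for u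
    by blast
qed

end

lemma component_mod4_labelling:
  assumes a: "a \<in> V" and dvd: "4 dvd card (component E a)"
  shows "\<exists>f. mod4_labelling E (component E a) f"
proof -
  obtain b where b: "b \<in> nbr E a"
    using card_nbr[OF a] by (auto simp: card_2_iff)
  obtain p where p: "3 \<le> p" "walk a b p = a" "walk a b (Suc p) = b" "inj_on (walk a b) {..<p}"
    using walk_returns[OF a b] by blast
  have comp: "component E a = walk a b ` {..<p}"
    using component_eq_walk_image[OF a b _ p(2,3)] p(1) by simp
  then have "4 dvd p"
    using dvd card_image[OF p(4)] by simp
  define f where "f v = inv_into {..<p} (walk a b) v mod 4" for v
  have f_walk: "f (walk a b n) = n mod 4" for n
  proof -
    have "f (walk a b n) = (n mod p) mod 4"
      using walk_period[OF p(2,3), of n] inv_into_f_f[OF p(4), of "n mod p"] p(1)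
      by (simp add: f_def)
    then show ?thesis
      using \<open>4 dvd p\<close> by (simp add: mod_mod_cancel)
  qed
  have "mod4_labelling E (component E a) f"
    unfolding mod4_labelling_def
  proof
    fix v assume "v \<in> component E a"
    then obtain i where "v = walk a b i"
      using comp by auto
    then have v: "v = walk a b (Suc (i + p - 1))"
      using walk_period[OF p(2,3), of i] walk_period[OF p(2,3), of "i + p"] p(1) by simp
    let ?k = "i + p - 1"
    have "nbr E v = {walk a b (Suc (Suc ?k)), walk a b ?k}"
      using nbr_walk_Suc[OF a b] v by auto
    moreover have "f (walk a b (Suc (Suc ?k))) = (f v + 1) mod 4"
      unfolding v f_walk by (simp add: mod_Suc_eq)
    moreover have "f (walk a b ?k) = (f v + 3) mod 4"
      unfolding v f_walk by (simp add: mod_add_left_eq)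
    moreover have "f v < 4"
      unfolding v f_walk by simp
    ultimately show "f v < 4 \<and> (\<exists>u1 u2. nbr E v = {u1, u2} \<and> f u1 = (f v + 1) mod 4 \<and> f u2 = (f v + 3) mod 4)"
      by blast
  qed
  then show ?thesis
    by blast
qed

lemma mod4_labelling_exists:
  assumes "\<forall>v\<in>V. 4 dvd card (component E v)"
  shows "\<exists>f. mod4_labelling E V f"
proof -
  define F where "F v = (SOME f. mod4_labelling E (component E v) f) v" for v
  have "F v < 4 \<and> (\<exists>u1 u2. nbr E v = {u1, u2} \<and> F u1 = (F v + 1) mod 4 \<and> F u2 = (F v + 3) mod 4)"
    if v: "v \<in> V" for v
  proof -
    define g where "g = (SOME f. mod4_labelling E (component E v) f)"
    have "\<exists>f. mod4_labelling E (component E v) f"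
      using component_mod4_labelling v assms by blast
    then have "mod4_labelling E (component E v) g"
      unfolding g_def by (rule someI_ex)
    then obtain u1 u2 where u: "nbr E v = {u1, u2}" "g u1 = (g v + 1) mod 4" "g u2 = (g v + 3) mod 4" "g v < 4"
      using self_in_component[of v E] unfolding mod4_labelling_def by blast
    have F_eq_g: "F u = g u" if "u \<in> component E v" for u
      using component_eq[OF that] by (simp add: F_def g_def)
    have "u1 \<in> component E v" "u2 \<in> component E v"
      using component_closed[OF self_in_component, of _ E v] u(1) by simp_all
    then have "F u1 = g u1" "F u2 = g u2" "F v = g v"
      using F_eq_g self_in_component[of v E] by simp_all
    then show ?thesis
      using u by metis
  qed
  then show ?thesis
    unfolding mod4_labelling_def by blast
qed

end

section \<open>From a two-factor to a biased dissolution\<close>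

lemma out_weight_edge_indicator:
  assumes "finite V" and "E' \<subseteq> E" and "x \<in> D" and "nbr E' x \<subseteq> V - D"
  shows "out_weight V E D (\<lambda>(u, v). if {u, v} \<in> E' \<and> P u v then 1 else 0) x
           = card {y \<in> nbr E' x. P x y}"
proof -
  have "{y \<in> {y. (x, y) \<in> Zset D V E}. {x, y} \<in> E' \<and> P x y} = {y \<in> nbr E' x. P x y}"
    using assms(2-4) by (auto simp: Zset_def nbr_def)
  then show ?thesis
    unfolding out_weight_def using sum_if_const_eq_card[OF finite_Zset_out[OF assms(1)]] by simp
qed

lemma in_weight_edge_indicator:
  assumes "finite V" and "D \<subseteq> V" and "E' \<subseteq> E" and "y \<in> V - D" and "nbr E' y \<subseteq> D"
  shows "in_weight V E D (\<lambda>(u, v). if {u, v} \<in> E' \<and> P u v then 1 else 0) y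
           = card {x \<in> nbr E' y. P x y}"
proof -
  have "{x \<in> {x. (x, y) \<in> Zset D V E}. {x, y} \<in> E' \<and> P x y} = {x \<in> nbr E' y. P x y}"
    using assms(3-5) by (auto simp: Zset_def nbr_def insert_commute)
  then show ?thesis
    unfolding in_weight_def using sum_if_const_eq_card[OF finite_Zset_in[OF assms(1,2)]] by simp
qed

lemma mod4_labelling_parity:
  assumes "mod4_labelling E V f" and "v \<in> V" and "u \<in> nbr E v"
  shows "even (f u) \<longleftrightarrow> odd (f v)"
proof -
  obtain u1 u2 where "nbr E v = {u1, u2}" "f u1 = (f v + 1) mod 4" "f u2 = (f v + 3) mod 4" "f v < 4"
    using assms(1,2) unfolding mod4_labelling_def by blast
  moreover have "f v = 0 \<or> f v = 1 \<or> f v = 2 \<or> f v = 3"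
    using \<open>f v < 4\<close> by linarith
  ultimately show ?thesis
    using assms(3) by auto
qed

lemma mod4_labelling_unique_one:
  assumes "mod4_labelling E V f" and "v \<in> V" and "even (f v)"
  shows "card {u \<in> nbr E v. f u = 1} = 1"
proof -
  obtain u1 u2 where u: "nbr E v = {u1, u2}" "f u1 = (f v + 1) mod 4" "f u2 = (f v + 3) mod 4" "f v < 4"
    using assms(1,2) unfolding mod4_labelling_def by blast
  moreover have "f v = 0 \<or> f v = 2"
    using \<open>f v < 4\<close> assms(3) by presburger
  ultimately have "{u \<in> nbr E v. f u = 1} = {if f v = 0 then u1 else u2}"
    by auto
  then show ?thesis
    by simp
qed

lemma biased_dissolution_22I:
  assumes "finite V" and "card V = 4 * q" and "0 < q" and "D \<subseteq> V" and "R \<subseteq> V - D"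
    and "\<And>p. z p \<le> 2" and "\<And>p. z\<alpha> p \<le> z p"
    and out_z: "\<And>x. x \<in> D \<Longrightarrow> out_weight V E D z x = 2"
    and out_z\<alpha>: "\<And>x. x \<in> D \<Longrightarrow> out_weight V E D z\<alpha> x = 1"
    and in_z: "\<And>y. y \<in> V - D \<Longrightarrow> in_weight V E D z y = 2"
    and in_z\<alpha>: "\<And>y. y \<in> V - D \<Longrightarrow> in_weight V E D z\<alpha> y = (if y \<in> R then 2 else 0)"
  shows "biased_dissolution V E 2 2 (\<lambda>_. 1) q D z z\<alpha> R"
proof -
  have card_D: "card D = 2 * q"
    using card_eq_half_if_cut_regular[OF assms(1,4) out_z in_z] assms(2) by simp
  have "card D = (\<Sum>y\<in>V - D. if y \<in> R then 2 else 0)"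
    using cut_weight_balance[OF assms(1,4), of E z\<alpha>] out_z\<alpha> in_z\<alpha> by simp
  also have "\<dots> = 2 * card {y \<in> V - D. y \<in> R}"
    using assms(1) by (intro sum_if_const_eq_card) simp
  also have "{y \<in> V - D. y \<in> R} = R"
    using assms(5) by blast
  finally have "card R = q"
    using card_D by simp
  moreover have "D \<subset> V"
    using assms(2-4) card_D by auto
  ultimately show ?thesis
    unfolding biased_dissolution_22_iff using assms by auto
qed

lemma biased_dissolution_of_mod4_labelling:
  assumes ugraph: "ugraph V E" and "card V = 4 * q" and "0 < q"
    and two_factor: "two_factor V E E'" and labelling: "mod4_labelling E' V f"
  shows "\<exists>D z z\<alpha> R. biased_dissolution V E 2 2 (\<lambda>_. 1) q D z z\<alpha> R"
proof -
  have fin: "finite V" and E'_sub: "E' \<subseteq> E"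
    using ugraph two_factor by (auto simp: ugraph_def two_factor_def)
  have card_nbr: "card (nbr E' v) = 2" if "v \<in> V" for v
    using that two_factor ugraph degree_eq_card_nbr[of E' v]
    by (auto simp: two_factor_def ugraph_def)
  have nbr_V: "nbr E' v \<subseteq> V" for v
    using E'_sub ugraph unfolding ugraph_def nbr_def by blast
  define D where "D = {v \<in> V. even (f v)}"
  define R where "R = {v \<in> V. f v = 1}"
  define z :: "'a \<times> 'a \<Rightarrow> nat" where "z = (\<lambda>(u, v). if {u, v} \<in> E' then 1 else 0)"
  define z\<alpha> :: "'a \<times> 'a \<Rightarrow> nat" where "z\<alpha> = (\<lambda>(u, v). if {u, v} \<in> E' \<and> f v = 1 then 1 else 0)"
  have D_V: "D \<subseteq> V" and R_sub: "R \<subseteq> V - D"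
    by (auto simp: D_def R_def)
  have nbr_D: "nbr E' x \<subseteq> V - D" if "x \<in> D" for x
    using that mod4_labelling_parity[OF labelling] nbr_V by (auto simp: D_def)
  have nbr_not_D: "nbr E' y \<subseteq> D" if "y \<in> V - D" for y
    using that mod4_labelling_parity[OF labelling] nbr_V by (auto simp: D_def)
  have out_z: "out_weight V E D z x = 2" and out_z\<alpha>: "out_weight V E D z\<alpha> x = 1" if "x \<in> D" for x
  proof -
    note out_weight = out_weight_edge_indicator[OF fin E'_sub that nbr_D[OF that]]
    show "out_weight V E D z x = 2"
      using out_weight[where P = "\<lambda>_ _. True"] card_nbr D_V that by (auto simp: z_def)
    show "out_weight V E D z\<alpha> x = 1"
      using out_weight[where P = "\<lambda>_ v. f v = 1"] mod4_labelling_unique_one[OF labelling] that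
      by (simp add: z\<alpha>_def D_def)
  qed
  have in_z: "in_weight V E D z y = 2" and in_z\<alpha>: "in_weight V E D z\<alpha> y = (if y \<in> R then 2 else 0)"
    if "y \<in> V - D" for y
  proof -
    note in_weight = in_weight_edge_indicator[OF fin D_V E'_sub that nbr_not_D[OF that]]
    show "in_weight V E D z y = 2"
      using in_weight[where P = "\<lambda>_ _. True"] card_nbr that by (simp add: z_def)
    show "in_weight V E D z\<alpha> y = (if y \<in> R then 2 else 0)"
      using in_weight[where P = "\<lambda>_ v. f v = 1"] card_nbr that by (simp add: z\<alpha>_def R_def)
  qed
  have "z p \<le> 2" "z\<alpha> p \<le> z p" for p
    by (auto simp: z_def z\<alpha>_def split: prod.splits)
  then show ?thesis
    using biased_dissolution_22I[OF fin assms(2,3) D_V R_sub] out_z out_z\<alpha> in_z in_z\<alpha> by blast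
qed

section \<open>From a biased dissolution to a two-factor\<close>

locale biased_22_dissolution =
  fixes V :: "'a set" and E :: "'a set set" and q :: nat
    and D :: "'a set" and z z\<alpha> :: "'a \<times> 'a \<Rightarrow> nat" and R :: "'a set"
  assumes finite_V: "finite V" and card_V: "card V = 4 * q"
    and D_subset: "D \<subset> V"
    and z_le: "\<And>p. p \<in> Zset D V E \<Longrightarrow> z p \<le> 2"
    and z\<alpha>_le_z: "\<And>p. p \<in> Zset D V E \<Longrightarrow> z\<alpha> p \<le> z p"
    and out_z: "\<And>x. x \<in> D \<Longrightarrow> out_weight V E D z x = 2"
    and out_z\<alpha>: "\<And>x. x \<in> D \<Longrightarrow> out_weight V E D z\<alpha> x = 1"
    and in_z: "\<And>y. y \<in> V - D \<Longrightarrow> in_weight V E D z y = 2"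
    and R_subset: "R \<subseteq> V - D" and card_R: "card R = q"
    and in_z\<alpha>_ge: "\<And>y. y \<in> R \<Longrightarrow> 2 \<le> in_weight V E D z\<alpha> y"
begin

lemma D_le_V: "D \<subseteq> V"
  using D_subset by blast

lemma card_D: "card D = 2 * q"
  using card_eq_half_if_cut_regular[OF finite_V D_le_V out_z in_z] card_V by simp

lemma in_z\<alpha>: "y \<in> V - D \<Longrightarrow> in_weight V E D z\<alpha> y = (if y \<in> R then 2 else 0)"
proof (rule sum_eq_bound_on_subset[where f = "in_weight V E D z\<alpha>"])
  have "(\<Sum>y\<in>V - D. in_weight V E D z\<alpha> y) = card D"
    using cut_weight_balance[OF finite_V D_le_V, of E z\<alpha>] out_z\<alpha> by simp
  then show "(\<Sum>y\<in>V - D. in_weight V E D z\<alpha> y) \<le> 2 * card R"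
    using card_D card_R by simp
qed (use finite_V R_subset in_z\<alpha>_ge in auto)

lemma z_le_one:
  assumes xy: "(x, y) \<in> Zset D V E"
  shows "z (x, y) \<le> 1"
proof (rule ccontr)
  assume "\<not> z (x, y) \<le> 1"
  then have z2: "z (x, y) = 2"
    using z_le[OF xy] by simp
  have x: "x \<in> D" and y: "y \<in> V - D"
    using xy by (auto simp: Zset_def)
  have "out_weight V E D z\<alpha> x = z\<alpha> (x, y)"
    unfolding out_weight_def
  proof (rule sum_eq_single_if_dominated[where f = "\<lambda>v. z (x, v)"])
    show "(\<Sum>v\<in>{v. (x, v) \<in> Zset D V E}. z (x, v)) = z (x, y)"
      using out_z[OF x] z2 by (simp add: out_weight_def)
  qed (use finite_Zset_out[OF finite_V] xy z\<alpha>_le_z in simp_all)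
  moreover have "in_weight V E D z\<alpha> y = z\<alpha> (x, y)"
    unfolding in_weight_def
  proof (rule sum_eq_single_if_dominated[where f = "\<lambda>u. z (u, y)"])
    show "(\<Sum>u\<in>{u. (u, y) \<in> Zset D V E}. z (u, y)) = z (x, y)"
      using in_z[OF y] z2 by (simp add: in_weight_def)
  qed (use finite_Zset_in[OF finite_V D_le_V] xy z\<alpha>_le_z in simp_all)
  ultimately show False
    using out_z\<alpha>[OF x] in_z\<alpha>[OF y] by (simp split: if_splits)
qed

definition unit_edges :: "'a set set" where
  "unit_edges = {{x, y} | x y. (x, y) \<in> Zset D V E \<and> z (x, y) = 1}"

lemma nbr_unit_edges_D: "x \<in> D \<Longrightarrow> nbr unit_edges x = {y. (x, y) \<in> Zset D V E \<and> z (x, y) = 1}"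
  by (auto simp: nbr_def unit_edges_def Zset_def doubleton_eq_iff)

lemma nbr_unit_edges_not_D:
  "y \<in> V - D \<Longrightarrow> nbr unit_edges y = {x. (x, y) \<in> Zset D V E \<and> z (x, y) = 1}"
  by (auto simp: nbr_def unit_edges_def Zset_def doubleton_eq_iff)

lemma card_nbr_unit_edges:
  assumes "v \<in> V"
  shows "card (nbr unit_edges v) = 2"
proof (cases "v \<in> D")
  case True
  have "out_weight V E D z v = card {y \<in> {y. (v, y) \<in> Zset D V E}. z (v, y) = 1}"
    unfolding out_weight_def
    by (rule sum_le_one_eq_card[OF finite_Zset_out[OF finite_V]]) (use z_le_one in blast)
  then show ?thesis
    using out_z[OF True] by (simp add: nbr_unit_edges_D[OF True])
next
  case False
  with assms have v: "v \<in> V - D"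
    by blast
  have "in_weight V E D z v = card {x \<in> {x. (x, v) \<in> Zset D V E}. z (x, v) = 1}"
    unfolding in_weight_def
    by (rule sum_le_one_eq_card[OF finite_Zset_in[OF finite_V D_le_V]]) (use z_le_one in blast)
  then show ?thesis
    using in_z[OF v] by (simp add: nbr_unit_edges_not_D[OF v])
qed

lemma two_factor_unit_edges: "two_factor V E unit_edges"
proof -
  have "card e = 2" if "e \<in> unit_edges" for e
    using that by (auto simp: unit_edges_def Zset_def card_insert_if)
  then show ?thesis
    using card_nbr_unit_edges degree_eq_card_nbr[of unit_edges]
    by (auto simp: two_factor_def unit_edges_def Zset_def)
qed

lemma component_unit_edges_subset: "v \<in> V \<Longrightarrow> component unit_edges v \<subseteq> V"
  by (rule component_subset) (use D_le_V in \<open>auto simp: nbr_def unit_edges_def Zset_def doubleton_eq_iff\<close>)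

lemma component_unit_edges_closed:
  assumes xy: "(x, y) \<in> Zset D V E" and "z (x, y) \<noteq> 0"
  shows "x \<in> component unit_edges v \<longleftrightarrow> y \<in> component unit_edges v"
proof -
  have "z (x, y) = 1"
    using assms z_le_one[OF xy] by simp
  then have "{x, y} \<in> unit_edges"
    unfolding unit_edges_def using xy by blast
  then have "y \<in> nbr unit_edges x" "x \<in> nbr unit_edges y"
    by (simp_all add: nbr_def insert_commute)
  then show ?thesis
    using component_closed[of x unit_edges v y] component_closed[of y unit_edges v x] by blast
qed

lemma cycle_lengths_mult4_unit_edges: "cycle_lengths_mult4 V unit_edges"
  unfolding cycle_lengths_mult4_def
proof
  fix v assume "v \<in> V"
  define C where "C = component unit_edges v"
  have closed: "x \<in> C \<longleftrightarrow> y \<in> C" if "(x, y) \<in> Zset D V E" and "z\<alpha> (x, y) \<noteq> 0 \<or> z (x, y) \<noteq> 0" for x y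
    unfolding C_def using that component_unit_edges_closed z\<alpha>_le_z[OF that(1)] by fastforce
  have "(\<Sum>x\<in>D \<inter> C. out_weight V E D z x) = (\<Sum>y\<in>(V - D) \<inter> C. in_weight V E D z y)"
    using closed by (intro sum_out_weight_eq_sum_in_weight[OF finite_V D_le_V]) blast
  then have balance: "card (D \<inter> C) = card ((V - D) \<inter> C)"
    using out_z in_z by simp
  have "card (D \<inter> C) = (\<Sum>x\<in>D \<inter> C. out_weight V E D z\<alpha> x)"
    using out_z\<alpha> by simp
  also have "\<dots> = (\<Sum>y\<in>(V - D) \<inter> C. in_weight V E D z\<alpha> y)"
    using closed by (intro sum_out_weight_eq_sum_in_weight[OF finite_V D_le_V]) blast
  also have "\<dots> = (\<Sum>y\<in>(V - D) \<inter> C. if y \<in> R then 2 else 0)"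
    using in_z\<alpha> by (intro sum.cong) auto
  also have "\<dots> = 2 * card {y \<in> (V - D) \<inter> C. y \<in> R}"
    using finite_V by (intro sum_if_const_eq_card) auto
  finally have "card (D \<inter> C) = 2 * card {y \<in> (V - D) \<inter> C. y \<in> R}" .
  moreover have "card C = card (D \<inter> C) + card ((V - D) \<inter> C)"
  proof -
    have "finite C" "(V - D) \<inter> C = C - D"
      using component_unit_edges_subset[OF \<open>v \<in> V\<close>] finite_V unfolding C_def
      by (auto intro: rev_finite_subset)
    then show ?thesis
      using card_Int_Diff[of C D] by (simp add: Int_commute)
  qed
  ultimately show "4 dvd card (component unit_edges v)"
    using balance unfolding C_def by simp
qed

end

theorem lemma4:
  fixes V :: "'a set" and E :: "'a set set" and q :: nat
  assumes "ugraph V E" and "q > 0" and "card V = 4 * q"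
  shows "(\<exists>E'. two_factor V E E' \<and> cycle_lengths_mult4 V E') \<longleftrightarrow>
         (\<exists>D z z\<alpha> R. biased_dissolution V E 2 2 (\<lambda>_. 1) q D z z\<alpha> R)"
proof
  assume "\<exists>E'. two_factor V E E' \<and> cycle_lengths_mult4 V E'"
  then obtain E' where two_factor: "two_factor V E E'" and mult4: "cycle_lengths_mult4 V E'"
    by blast
  interpret two_regular V E'
    using assms(1) two_factor by unfold_locales (auto simp: ugraph_def two_factor_def)
  obtain f where "mod4_labelling E' V f"
    using mod4_labelling_exists mult4 unfolding cycle_lengths_mult4_def by blast
  then show "\<exists>D z z\<alpha> R. biased_dissolution V E 2 2 (\<lambda>_. 1) q D z z\<alpha> R"
    using biased_dissolution_of_mod4_labelling assms two_factor by blast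
next
  assume "\<exists>D z z\<alpha> R. biased_dissolution V E 2 2 (\<lambda>_. 1) q D z z\<alpha> R"
  then obtain D z z\<alpha> R where "biased_dissolution V E 2 2 (\<lambda>_. 1) q D z z\<alpha> R"
    by blast
  then interpret biased_22_dissolution V E q D z z\<alpha> R
    using assms(1,3) unfolding biased_dissolution_22_iff by unfold_locales (auto simp: ugraph_def)
  show "\<exists>E'. two_factor V E E' \<and> cycle_lengths_mult4 V E'"
    using two_factor_unit_edges cycle_lengths_mult4_unit_edges by blast
qed

end
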